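(* Let $i\ge 3$ and $k\ge 3$ be integers. Then: (a) $n_1(F_i,F_{i+2},F_{i+k})=\tfrac12\bigl(3F_iF_{i+2}-F_i-F_{i+2}+1\bigr)$ whenever $k\ge i+2$; (b) for $k\in\{i,i+1\}$, $n_1(F_i,F_{i+2},F_{i+k})=\tfrac12\bigl(3F_iF_{i+2}-F_i-F_{i+2}+1\bigr)-(2F_i-F_k)F_{k-2}$; (c) if $r=\lfloor (F_i-1)/F_k\rfloor\ge 1$ (equivalently $k\le i-1$), then $$n_1(F_i,F_{i+2},F_{i+k})=\tfrac12\bigl((F_i+2F_k-1)F_{i+2}-F_i+1\bigr)-\Bigl(rF_i-\frac{(r-1)(r+2)}{2}F_k\Bigr)F_{k-2}.$$
   Context: Fibonacci numbers: $F_0=0$, $F_1=1$, $F_n=F_{n-1}+F_{n-2}$. For positive integers $a_1,\dots,a_l$ with $\gcd(a_1,\dots,a_l)=1$ and an integer $n$, let $d(n;a_1,\dots,a_l)$ be the number of tuples $(x_1,\dots,x_l)$ of nonnegative integers with $a_1x_1+\dots+a_lx_l=n$. For a nonnegative integer $p$, the $p$-Sylvester number $n_p(a_1,\dots,a_l)$ is the number of nonnegative integers $n$ with $d(n;a_1,\dots,a_l)\le p$. *)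

theory Defs
  imports Main "HOL-Number_Theory.Fib"
begin

definition num_reps :: "nat list \<Rightarrow> nat \<Rightarrow> nat" where
  "num_reps as n = card {xs :: nat list. length xs = length as \<and>
      (\<Sum>j<length as. as ! j * xs ! j) = n}"

definition sylvester_p :: "nat \<Rightarrow> nat list \<Rightarrow> nat" where
  "sylvester_p p as = card {n :: nat. num_reps as n \<le> p}"

end

theory Submission
  imports Defs "HOL-Number_Theory.Cong"
begin

text \<open>
  Put a = F(i), b = F(i+2), q = F(k), p = F(k-2). The identity F(i+k) = F(k) F(i+2) - F(k-2) F(i)
  makes the third generator c = q b - p a, and 3 p a \<le> q b. Every n \<ge> 0 is uniquely a X + b u
  with 0 \<le> u < a and X \<ge> -\<lfloor>b u / a\<rfloor>. The representations a x + b y + c z = n are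
  parametrised by z and a shift j with y + q z = u + a j and x = X + p z - b j; the inequality
  3 p a \<le> q b forces j = 0 and pins down z as long as X is below an explicit bound m(u), while
  from m(u) on there are two representations. Hence n_1 = \<Sum>u<a. (m(u) + \<lfloor>b u / a\<rfloor>), the
  floor sum is (a - 1)(b - 1)/2 by coprimality, and summing m(u) splits into the cases a \<le> q
  (parts (a) and (b)) and q < a (part (c)).
\<close>

lemma num_reps_three:
  "num_reps [a, b, c] n = card {(x, y, z). a * x + b * y + c * z = n}"
proof -
  let ?L = "{xs. length xs = length [a, b, c] \<and> (\<Sum>j<length [a, b, c]. [a, b, c] ! j * xs ! j) = n}"
  let ?T = "{(x, y, z). a * x + b * y + c * z = n}"
  have "?L = (\<lambda>(x, y, z). [x, y, z]) ` ?T"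
  proof (intro set_eqI iffI)
    fix xs
    assume xs: "xs \<in> ?L"
    then obtain x y z where "xs = [x, y, z]"
      by (auto simp: numeral_3_eq_3 length_Suc_conv)
    moreover from xs this have "(x, y, z) \<in> ?T"
      by (simp add: numeral_3_eq_3 lessThan_Suc)
    ultimately show "xs \<in> (\<lambda>(x, y, z). [x, y, z]) ` ?T"
      by force
  qed (auto simp: numeral_3_eq_3 lessThan_Suc)
  moreover have "inj_on (\<lambda>(x, y, z). [x, y, z]) ?T"
    by (auto simp: inj_on_def)
  ultimately show ?thesis
    by (simp add: num_reps_def card_image)
qed

lemma num_reps_three_le_one_iff:
  fixes a b c n :: nat
  assumes "a > 0" and "b > 0" and "c > 0"
  shows "num_reps [a, b, c] n \<le> 1 \<longleftrightarrow>
    (\<forall>x y z x' y' z'. a * x + b * y + c * z = n \<longrightarrow> a * x' + b * y' + c * z' = n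
       \<longrightarrow> x = x' \<and> y = y' \<and> z = z')"
proof -
  let ?T = "{(x, y, z). a * x + b * y + c * z = n}"
  have "x \<le> n \<and> y \<le> n \<and> z \<le> n" if "a * x + b * y + c * z = n" for x y z
  proof -
    have "x \<le> a * x" "y \<le> b * y" "z \<le> c * z"
      using assms by simp_all
    with that show ?thesis
      by linarith
  qed
  then have "?T \<subseteq> {..n} \<times> {..n} \<times> {..n}"
    by auto
  then have "finite ?T"
    by (rule finite_subset) simp
  then have "num_reps [a, b, c] n \<le> 1 \<longleftrightarrow> (\<forall>t\<in>?T. \<forall>t'\<in>?T. t = t')"
    by (simp add: num_reps_three card_le_Suc0_iff_eq)
  also have "\<dots> \<longleftrightarrow> (\<forall>x y z x' y' z'. a * x + b * y + c * z = n \<longrightarrow> a * x' + b * y' + c * z' = n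
       \<longrightarrow> x = x' \<and> y = y' \<and> z = z')"
    by (simp add: Ball_def)
  finally show ?thesis .
qed

lemma nonneg_iff_ge_neg_div:
  fixes a B :: nat and X :: int
  assumes "a > 0"
  shows "0 \<le> int a * X + int B \<longleftrightarrow> - int (B div a) \<le> X"
proof -
  have "(int a * X + int B) div int a = X + int (B div a)"
    using assms by (simp add: zdiv_int add.commute)
  then show ?thesis
    using pos_imp_zdiv_nonneg_iff[of "int a" "int a * X + int B"] assms by (simp, arith)
qed

lemma exists_residue_decomposition:
  fixes a b n :: nat
  assumes "coprime a b" and "a > 0"
  obtains u X where "u < a" and "int n = int a * X + int b * int u"
proof -
  obtain w where w: "[b * w = 1] (mod a)"
    using cong_solve_coprime_nat[of b a] assms(1) by (auto simp: coprime_commute)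
  define u where "u = w * n mod a"
  have "[b * u = b * (w * n)] (mod a)"
    by (simp add: u_def cong_def mod_mult_right_eq)
  also have "[b * (w * n) = 1 * n] (mod a)"
    using w by (metis cong_scalar_right mult.assoc)
  finally have "int a dvd int n - int b * int u"
    by (simp add: cong_iff_dvd_diff cong_sym_eq flip: cong_int_iff)
  then obtain X where "int n - int b * int u = int a * X"
    by (auto simp: dvd_def)
  moreover have "u < a"
    using assms(2) by (simp add: u_def)
  ultimately show ?thesis
    using that by (simp add: algebra_simps)
qed

lemma residue_decomposition_unique:
  fixes a b u u' :: nat and X X' :: int
  assumes "coprime a b" and "u < a" and "u' < a"
    and eq: "int a * X + int b * int u = int a * X' + int b * int u'"
  shows "u = u' \<and> X = X'"
proof -
  have "int a * (X - X') = int b * (int u' - int u)"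
    using eq by (simp add: algebra_simps)
  then have "int a dvd int b * (int u' - int u)"
    by (metis dvd_def)
  with assms(1) have "int a dvd int u' - int u"
    by (simp add: coprime_dvd_mult_right_iff)
  moreover have "\<bar>int u' - int u\<bar> < int a"
    using assms(2,3) by auto
  ultimately have "u = u'"
    using dvd_imp_le_int[of "int u' - int u" "int a"] by (cases "u = u'") simp_all
  with eq assms(2) show ?thesis
    by simp
qed

lemma div_add_div_complement:
  fixes a b u :: nat
  assumes "coprime a b" and "0 < u" and "u < a"
  shows "b * u div a + b * (a - u) div a = b - 1"
proof -
  have "\<not> a dvd b * u"
    using assms by (auto simp: coprime_dvd_mult_right_iff dest: dvd_imp_le)
  then have "int (b * u) mod int a \<noteq> 0"
    by (metis dvd_eq_mod_eq_0 int_dvd_int_iff)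
  then have "- int (b * u) div int a = - int (b * u div a) - 1"
    using assms by (simp add: zdiv_zminus1_eq_if zdiv_int)
  moreover have "int (b * (a - u)) = - int (b * u) + int b * int a"
    using assms by (simp add: algebra_simps)
  ultimately have "int (b * (a - u) div a) = int b - int (b * u div a) - 1"
    using assms by (simp only: zdiv_int div_mult_self1)
  then show ?thesis
    by linarith
qed

lemma sum_div_coprime:
  fixes a b :: nat
  assumes "coprime a b"
  shows "2 * (\<Sum>u<a. b * u div a) = (a - 1) * (b - 1)"
proof (cases "a = 0")
  case False
  define g where "g u = b * u div a" for u
  have "(\<Sum>u<a. g u) = (\<Sum>u=1..<a. g u)"
    using False by (simp add: g_def atLeast0LessThan[symmetric] sum.atLeast_Suc_lessThan)
  moreover have "(\<Sum>u=1..<a. g u) = (\<Sum>u=1..<a. g (a - u))"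
    by (subst sum.atLeastLessThan_rev) (auto intro: sum.cong)
  moreover have "(\<Sum>u=1..<a. g u + g (a - u)) = (a - 1) * (b - 1)"
    using div_add_div_complement[OF assms] by (simp add: g_def)
  ultimately show ?thesis
    by (simp add: g_def sum.distrib)
qed simp

lemma sum_lessThan_add:
  fixes f :: "nat \<Rightarrow> 'a::comm_monoid_add"
  shows "(\<Sum>u<m + n. f u) = (\<Sum>u<m. f u) + (\<Sum>t<n. f (m + t))"
  by (induction n) (simp_all add: add.assoc)

lemma sum_div_window:
  fixes a q :: nat
  assumes "q > 0"
  shows "(\<Sum>t<q. (a + t) div q) = a"
proof (induction a)
  case (Suc a)
  define f where "f t = (a + t) div q" for t
  have "(\<Sum>t<q. f (Suc t)) + f 0 = (\<Sum>t<q. f t) + f q"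
    using sum.lessThan_Suc_shift[of f q] by simp
  moreover have "f q = f 0 + 1"
    using assms by (simp add: f_def)
  ultimately show ?case
    using Suc by (simp add: f_def)
qed (use assms in simp)

lemma sum_div_lessThan:
  fixes q r e :: nat
  assumes "q > 0" and "e \<le> q"
  shows "2 * int (\<Sum>u<r * q + e. u div q) = int q * int r * (int r - 1) + 2 * int r * int e"
proof (induction r)
  case 0
  show ?case
    using assms by simp
next
  case (Suc r)
  have "(\<Sum>u<Suc r * q + e. u div q)
      = (\<Sum>u<r * q + e. u div q) + (\<Sum>t<q. (r * q + e + t) div q)"
    using sum_lessThan_add[of "\<lambda>u. u div q" "r * q + e" q] by (simp add: algebra_simps)
  also have "(\<Sum>t<q. (r * q + e + t) div q) = r * q + e"
    using assms(1) by (rule sum_div_window)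
  finally show ?case
    using Suc by (simp add: algebra_simps)
qed

text \<open>
  For q \<le> u the two competing representations use
  z = u div q and z = u div q - 1; otherwise they use z = 0 and, borrowing one block a into y,
  z = (u + a) div q.
\<close>
definition unique_rep_bound :: "nat \<Rightarrow> nat \<Rightarrow> nat \<Rightarrow> nat \<Rightarrow> nat \<Rightarrow> int" where
  "unique_rep_bound a b p q u =
     (if q \<le> u then - int p * (int (u div q) - 1) else int b - int p * int ((u + a) div q))"

lemma sum_unique_rep_bound_le:
  fixes a b p q :: nat
  assumes "a \<le> q"
  shows "(\<Sum>u<a. unique_rep_bound a b p q u) = int a * int b - int p * int (2 * a - q)"
proof -
  have "(\<Sum>u<a. (u + a) div q) = (\<Sum>u<a. if q \<le> u + a then 1 else 0)"
  proof (rule sum.cong)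
    fix u assume "u \<in> {..<a}"
    then show "(u + a) div q = (if q \<le> u + a then 1 else 0)"
      using assms by (auto intro: div_nat_eqI)
  qed simp
  also have "\<dots> = card {q - a..<a}"
  proof -
    have "{..<a} \<inter> {u. q \<le> u + a} = {q - a..<a}"
      by auto
    then show ?thesis
      by (simp add: sum.If_cases)
  qed
  finally have "(\<Sum>u<a. (u + a) div q) = 2 * a - q"
    using assms by simp
  moreover have "(\<Sum>u<a. unique_rep_bound a b p q u) = (\<Sum>u<a. int b - int p * int ((u + a) div q))"
    using assms by (intro sum.cong) (auto simp: unique_rep_bound_def)
  ultimately show ?thesis
    by (simp add: sum_subtractf flip: sum_distrib_left of_nat_sum)
qed

lemma sum_unique_rep_bound_gt:
  fixes a b p q :: nat
  assumes "0 < q" and "q < a"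
  shows "(\<Sum>u<a. unique_rep_bound a b p q u)
           = int q * int b - int p * int a - int p * int (\<Sum>t<a - q. t div q)"
proof -
  have "(\<Sum>u<q. unique_rep_bound a b p q u) = (\<Sum>u<q. int b - int p * int ((a + u) div q))"
    by (intro sum.cong) (auto simp: unique_rep_bound_def add.commute)
  also have "\<dots> = int q * int b - int p * int a"
    using sum_div_window[OF assms(1), of a]
    by (simp add: sum_subtractf flip: sum_distrib_left of_nat_sum)
  finally have low: "(\<Sum>u<q. unique_rep_bound a b p q u) = int q * int b - int p * int a" .
  have "(\<Sum>t<a - q. unique_rep_bound a b p q (q + t)) = (\<Sum>t<a - q. - int p * int (t div q))"
    using assms(1) by (intro sum.cong) (auto simp: unique_rep_bound_def)
  then have high: "(\<Sum>t<a - q. unique_rep_bound a b p q (q + t))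
      = - int p * int (\<Sum>t<a - q. t div q)"
    by (simp add: sum_distrib_left)
  show ?thesis
    using sum_lessThan_add[of "unique_rep_bound a b p q" q "a - q"] assms(2) low high by simp
qed

lemma sum_unique_rep_bound_gt_closed:
  fixes a b p q r :: nat
  assumes "0 < q" and "0 < a" and r: "r = (a - 1) div q" and "r \<ge> 1"
  shows "2 * (\<Sum>u<a. unique_rep_bound a b p q u) = 2 * (int q * int b - int p * int a)
    - int p * (int q * (int r - 1) * (int r - 2) + 2 * (int r - 1) * (int a - int r * int q))"
proof -
  define e where "e = a - r * q"
  have "a - 1 = r * q + (a - 1) mod q" and "(a - 1) mod q < q"
    using r \<open>0 < q\<close> by simp_all
  then have "r * q < a" and "e \<le> q"
    using \<open>0 < a\<close> unfolding e_def by linarith+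
  moreover have "q \<le> r * q"
    using \<open>r \<ge> 1\<close> by simp
  ultimately have "q < a" and a_q: "a - q = (r - 1) * q + e"
    by (linarith, simp add: e_def diff_mult_distrib)
  define T where "T = (\<Sum>t<a - q. t div q)"
  have "2 * int T = int q * int (r - 1) * (int (r - 1) - 1) + 2 * int (r - 1) * int e"
    unfolding T_def a_q using \<open>0 < q\<close> \<open>e \<le> q\<close> by (rule sum_div_lessThan)
  then have T2: "2 * int T
      = int q * (int r - 1) * (int r - 2) + 2 * (int r - 1) * (int a - int r * int q)"
    using \<open>r \<ge> 1\<close> \<open>r * q < a\<close> by (simp add: e_def)
  have "2 * (\<Sum>u<a. unique_rep_bound a b p q u)
      = 2 * (int q * int b - int p * int a) - int p * (2 * int T)"
    using sum_unique_rep_bound_gt[OF \<open>0 < q\<close> \<open>q < a\<close>, of b p]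
    by (simp add: T_def algebra_simps)
  then show ?thesis
    by (simp only: T2)
qed

locale sylvester_triple =
  fixes a b c p q :: nat
  assumes coprime_ab: "coprime a b"
    and a_pos: "a > 0" and b_pos: "b > 0" and q_pos: "q > 0"
    and c_eq: "int c = int q * int b - int p * int a"
    and three_pa_le_qb: "3 * p * a \<le> q * b"
begin

lemma three_pa_le_qb_int: "3 * (int p * int a) \<le> int q * int b"
  using three_pa_le_qb by (metis mult.assoc of_nat_le_iff of_nat_mult of_nat_numeral)

lemma c_pos: "c > 0"
proof -
  have "int q * int b > 0"
    using q_pos b_pos by simp
  then show ?thesis
    using c_eq three_pa_le_qb_int by linarith
qed

lemma rep_parameters:
  assumes "u < a"
    and "int a * int x + int b * int y + int c * int z = int a * X + int b * int u"
  obtains j :: nat where "int y + int q * int z = int u + int a * int j"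
    and "int x = X + int p * int z - int b * int j"
proof -
  have e: "int a * (int x - int p * int z - X) = int b * (int u - int y - int q * int z)"
    using assms(2) c_eq by (simp add: algebra_simps)
  then have "int a dvd int b * (int u - int y - int q * int z)"
    by (metis dvd_triv_left)
  with coprime_ab have "int a dvd int u - int y - int q * int z"
    by (simp add: coprime_dvd_mult_right_iff)
  then obtain t where t: "int u - int y - int q * int z = int a * t"
    by (auto simp: dvd_def)
  have "t \<le> 0"
  proof (rule ccontr)
    assume "\<not> t \<le> 0"
    then have "int a \<le> int a * t"
      using a_pos by simp
    with t assms(1) show False
      by (smt (verit) of_nat_0_le_iff of_nat_less_iff mult_nonneg_nonneg)
  qed
  from e t have "int a * (int x - int p * int z - X) = int a * (int b * t)"
    by (simp add: algebra_simps)
  then have "int x - int p * int z - X = int b * t"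
    using a_pos by simp
  with t \<open>t \<le> 0\<close> show ?thesis
    by (intro that[of "nat (- t)"]) (simp_all add: algebra_simps)
qed

lemma shift_cost:
  assumes "int q * int z \<le> int u + int a * int j" and "int b * int j - int p * int z \<le> X"
  shows "int q * int b * int j \<le> int q * X + int p * int u + int p * int a * int j"
proof -
  have "int p * (int q * int z) \<le> int p * (int u + int a * int j)"
    using assms(1) by (intro mult_left_mono) auto
  moreover have "int q * (int b * int j - int p * int z) \<le> int q * X"
    using assms(2) by (intro mult_left_mono) auto
  ultimately show ?thesis
    by (simp add: algebra_simps)
qed

lemma no_shift_below_bound_if_q_le:
  assumes u: "u < a" and "q \<le> u" and X: "X < unique_rep_bound a b p q u"
    and v1: "int q * int z \<le> int u + int a * int j"
    and v2: "int b * int j - int p * int z \<le> X"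
  shows "j = 0"
proof (rule ccontr)
  assume "j \<noteq> 0"
  define s where "s = u div q"
  have "int p * int a \<le> int q * int b"
    using three_pa_le_qb_int zero_le_mult_iff[of "int p" "int a"] by linarith
  with \<open>j \<noteq> 0\<close> have "1 * (int q * int b - int p * int a) \<le> int j * (int q * int b - int p * int a)"
    by (intro mult_right_mono) simp_all
  moreover have "int q * X \<le> int q * (- int p * (int s - 1) - 1)"
    using X \<open>q \<le> u\<close> by (intro mult_left_mono) (auto simp: unique_rep_bound_def s_def)
  moreover have "u = q * s + u mod q" and "u mod q < q"
    using q_pos by (simp_all add: s_def)
  then have "u + 1 \<le> q * s + q"
    by linarith
  then have "int p * (int u + 1) \<le> int p * (int q * int s + int q)"
    by (intro mult_left_mono) (simp_all flip: of_nat_mult of_nat_add of_nat_le_iff)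
  moreover have "int p * int q \<le> int p * int a"
    using \<open>q \<le> u\<close> u by (intro mult_left_mono) auto
  ultimately show False
    using shift_cost[OF v1 v2] three_pa_le_qb_int q_pos by (simp add: algebra_simps)
qed

lemma no_shift_below_bound_if_less_q:
  assumes u: "u < a" and "u < q" and X: "X < unique_rep_bound a b p q u"
    and v1: "int q * int z \<le> int u + int a * int j"
    and v2: "int b * int j - int p * int z \<le> X"
  shows "j = 0"
proof (rule ccontr)
  assume "j \<noteq> 0"
  define s where "s = (u + a) div q"
  have Xs: "X \<le> int b - int p * int s - 1"
    using X \<open>u < q\<close> by (simp add: unique_rep_bound_def s_def)
  show False
  proof (cases "j = 1")
    case True
    then have "q * z \<le> u + a"
      using v1 by (simp flip: of_nat_mult of_nat_add)
    then have "z \<le> s"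
      using q_pos by (simp add: s_def less_eq_div_iff_mult_less_eq mult.commute)
    then have "int p * int z \<le> int p * int s"
      by (intro mult_left_mono) auto
    then show False
      using v2 Xs True by simp
  next
    case False
    with \<open>j \<noteq> 0\<close> have "int j \<ge> 2"
      by simp
    have "X \<le> int b - 1"
      using Xs zero_le_mult_iff[of "int p" "int s"] by linarith
    then have "int q * X \<le> int q * (int b - 1)"
      by (intro mult_left_mono) auto
    moreover have "int p * int u \<le> int p * int a"
      using u by (intro mult_left_mono) auto
    moreover have "(int j - 1) * (3 * (int p * int a)) \<le> (int j - 1) * (int q * int b)"
      using \<open>int j \<ge> 2\<close> three_pa_le_qb_int by (intro mult_left_mono) auto
    moreover have "0 \<le> (int p * int a) * (2 * int j - 4)"
      using \<open>int j \<ge> 2\<close> by simp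
    ultimately show False
      using shift_cost[OF v1 v2] q_pos by (simp add: algebra_simps)
  qed
qed

lemma rep_parameters_below_bound:
  assumes u: "u < a" and X: "X < unique_rep_bound a b p q u"
    and v1: "int q * int z \<le> int u + int a * int j"
    and v2: "int b * int j - int p * int z \<le> X"
  shows "j = 0 \<and> z = (if q \<le> u then u div q else 0)"
proof -
  have "j = 0"
    using no_shift_below_bound_if_q_le[OF u _ X v1 v2]
      no_shift_below_bound_if_less_q[OF u _ X v1 v2] by linarith
  with v1 have "q * z \<le> u"
    by (simp flip: of_nat_mult)
  show ?thesis
  proof (cases "q \<le> u")
    case True
    define s where "s = u div q"
    have "z \<le> s"
      using \<open>q * z \<le> u\<close> q_pos by (simp add: s_def less_eq_div_iff_mult_less_eq mult.commute)
    moreover have "int p * (int s - 1) < int p * int z"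
      using X v2 True \<open>j = 0\<close> by (simp add: unique_rep_bound_def s_def)
    then have "int s - 1 < int z"
      by (rule mult_left_less_imp_less) simp
    ultimately show ?thesis
      using True \<open>j = 0\<close> by (simp add: s_def)
  next
    case False
    with \<open>q * z \<le> u\<close> have "z = 0"
      by (cases z) auto
    with False \<open>j = 0\<close> show ?thesis
      by simp
  qed
qed

lemma rep_of_parameters:
  assumes "q * z \<le> u + a * j" and "0 \<le> X + int p * int z - int b * int j"
  shows "int a * int (nat (X + int p * int z - int b * int j)) + int b * int (u + a * j - q * z)
           + int c * int z = int a * X + int b * int u"
  using assms by (simp add: c_eq algebra_simps)

lemma p_mult_div_le_b:
  assumes "u < a" and "u < q"
  shows "p * ((u + a) div q) \<le> b"
proof (cases "(u + a) div q = 0")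
  case False
  define s where "s = (u + a) div q"
  have "q * s \<le> u + a"
    by (simp add: s_def)
  moreover have "q \<le> q * s"
    using False s_def by simp
  ultimately have "q \<le> 2 * a"
    using assms(1) by linarith
  have "q * (p * s) \<le> p * (u + a)"
    using \<open>q * s \<le> u + a\<close> by (metis mult.left_commute mult_le_mono2)
  also have "\<dots> \<le> p * (2 * a + a)"
    using assms \<open>q \<le> 2 * a\<close> by (intro mult_le_mono2) linarith
  also have "\<dots> \<le> q * b"
    using three_pa_le_qb by (simp add: algebra_simps)
  finally show ?thesis
    using q_pos s_def by simp
qed simp

lemma two_reps_from_bound_if_q_le:
  assumes "q \<le> u" and X: "unique_rep_bound a b p q u \<le> X"
  obtains x y z x' y' z' where "(x, y, z) \<noteq> (x', y', z')"
    and "int a * int x + int b * int y + int c * int z = int a * X + int b * int u"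
    and "int a * int x' + int b * int y' + int c * int z' = int a * X + int b * int u"
proof -
  define s where "s = u div q"
  have "s \<ge> 1"
    using \<open>q \<le> u\<close> q_pos by (simp add: s_def div_greater_zero_iff Suc_le_eq)
  have "q * s \<le> u"
    by (simp add: s_def)
  then have "q * (s - 1) \<le> u"
    by (meson diff_le_self le_trans mult_le_mono2)
  have "0 \<le> X + int p * int (s - 1)"
    using X \<open>q \<le> u\<close> \<open>s \<ge> 1\<close> by (simp add: unique_rep_bound_def s_def algebra_simps)
  then have "0 \<le> X + int p * int s"
    using \<open>s \<ge> 1\<close> by (simp add: algebra_simps)
  have "int a * int (nat (X + int p * int s)) + int b * int (u - q * s) + int c * int s
          = int a * X + int b * int u"
    using rep_of_parameters[of s u 0 X] \<open>q * s \<le> u\<close> \<open>0 \<le> X + int p * int s\<close> by simp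
  moreover have "int a * int (nat (X + int p * int (s - 1))) + int b * int (u - q * (s - 1))
          + int c * int (s - 1) = int a * X + int b * int u"
    using rep_of_parameters[of "s - 1" u 0 X] \<open>q * (s - 1) \<le> u\<close> \<open>0 \<le> X + int p * int (s - 1)\<close>
    by simp
  ultimately show ?thesis
    by (rule that[rotated]) (use \<open>s \<ge> 1\<close> in auto)
qed

lemma two_reps_from_bound_if_less_q:
  assumes u: "u < a" and "u < q" and X: "unique_rep_bound a b p q u \<le> X"
  obtains x y z x' y' z' where "(x, y, z) \<noteq> (x', y', z')"
    and "int a * int x + int b * int y + int c * int z = int a * X + int b * int u"
    and "int a * int x' + int b * int y' + int c * int z' = int a * X + int b * int u"
proof -
  define s where "s = (u + a) div q"
  have "q * s \<le> u + a"
    by (simp add: s_def)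
  have "p * s \<le> b"
    using p_mult_div_le_b u \<open>u < q\<close> by (simp add: s_def)
  then have "0 \<le> X"
    using X \<open>u < q\<close> by (simp add: unique_rep_bound_def s_def flip: of_nat_mult)
  have "0 \<le> X + int p * int s - int b"
    using X \<open>u < q\<close> by (simp add: unique_rep_bound_def s_def)
  have "int a * int (nat X) + int b * int u + int c * int 0 = int a * X + int b * int u"
    using \<open>0 \<le> X\<close> by simp
  moreover have "int a * int (nat (X + int p * int s - int b)) + int b * int (u + a - q * s)
          + int c * int s = int a * X + int b * int u"
    using rep_of_parameters[of s u 1 X] \<open>q * s \<le> u + a\<close> \<open>0 \<le> X + int p * int s - int b\<close>
    by simp
  moreover have "(nat X, u, 0) \<noteq> (nat (X + int p * int s - int b), u + a - q * s, s)"
    using a_pos by (cases s) auto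
  ultimately show ?thesis
    using that by blast
qed

lemma two_reps_from_bound:
  assumes "u < a" and "unique_rep_bound a b p q u \<le> X"
  obtains x y z x' y' z' where "(x, y, z) \<noteq> (x', y', z')"
    and "int a * int x + int b * int y + int c * int z = int a * X + int b * int u"
    and "int a * int x' + int b * int y' + int c * int z' = int a * X + int b * int u"
  using two_reps_from_bound_if_q_le two_reps_from_bound_if_less_q assms
  by (metis not_le)

lemma unique_rep_bound_ge:
  assumes "u < a"
  shows "- int (b * u div a) \<le> unique_rep_bound a b p q u"
proof (cases "q \<le> u")
  case True
  define s where "s = u div q"
  have "q * (a * (p * s)) = (a * p) * (q * s)"
    by (simp add: algebra_simps)
  also have "\<dots> \<le> (a * p) * u"
    by (intro mult_le_mono2) (simp add: s_def)
  also have "\<dots> \<le> (3 * p * a) * u"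
    by (intro mult_le_mono1) simp
  also have "\<dots> \<le> (q * b) * u"
    using three_pa_le_qb by (rule mult_le_mono1)
  finally have "a * (p * s) \<le> b * u"
    using q_pos by (simp add: algebra_simps)
  then have "p * s \<le> b * u div a"
    using a_pos by (simp add: less_eq_div_iff_mult_less_eq mult.commute)
  then have "int p * int s \<le> int (b * u div a)"
    by (metis of_nat_le_iff of_nat_mult)
  then have "int p * (int s - 1) \<le> int (b * u div a)"
    by (simp add: right_diff_distrib)
  with True show ?thesis
    by (simp add: unique_rep_bound_def s_def)
next
  case False
  then have "p * ((u + a) div q) \<le> b"
    using assms by (intro p_mult_div_le_b) simp_all
  with False show ?thesis
    by (simp add: unique_rep_bound_def flip: of_nat_mult)
qed

lemma rep_unique_below_bound:
  assumes u: "u < a" and X: "X < unique_rep_bound a b p q u"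
    and r: "int a * int x + int b * int y + int c * int z = int a * X + int b * int u"
    and r': "int a * int x' + int b * int y' + int c * int z' = int a * X + int b * int u"
  shows "x = x' \<and> y = y' \<and> z = z'"
proof -
  obtain j where j: "int y + int q * int z = int u + int a * int j"
      "int x = X + int p * int z - int b * int j"
    using rep_parameters[OF u r] .
  obtain j' where j': "int y' + int q * int z' = int u + int a * int j'"
      "int x' = X + int p * int z' - int b * int j'"
    using rep_parameters[OF u r'] .
  have "int q * int z \<le> int u + int a * int j" "int b * int j - int p * int z \<le> X"
    using j by linarith+
  moreover have "int q * int z' \<le> int u + int a * int j'" "int b * int j' - int p * int z' \<le> X"
    using j' by linarith+
  ultimately have "j = j' \<and> z = z'"
    using rep_parameters_below_bound[OF u X, of z j] rep_parameters_below_bound[OF u X, of z' j']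
    by simp
  with j j' show ?thesis
    by simp
qed

lemma num_reps_le_one_iff_less_bound:
  assumes u: "u < a" and nonneg: "0 \<le> int a * X + int b * int u"
  shows "num_reps [a, b, c] (nat (int a * X + int b * int u)) \<le> 1
    \<longleftrightarrow> X < unique_rep_bound a b p q u"
proof -
  have rep_iff: "a * x + b * y + c * z = nat (int a * X + int b * int u)
      \<longleftrightarrow> int a * int x + int b * int y + int c * int z = int a * X + int b * int u" for x y z
    using nonneg by (simp add: nat_eq_iff2) metis
  show ?thesis
    unfolding num_reps_three_le_one_iff[OF a_pos b_pos c_pos] rep_iff
  proof (intro iffI allI impI)
    assume unique: "\<forall>x y z x' y' z'.
      int a * int x + int b * int y + int c * int z = int a * X + int b * int u \<longrightarrow>
      int a * int x' + int b * int y' + int c * int z' = int a * X + int b * int u \<longrightarrow>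
      x = x' \<and> y = y' \<and> z = z'"
    show "X < unique_rep_bound a b p q u"
    proof (rule ccontr)
      assume "\<not> X < unique_rep_bound a b p q u"
      then have "unique_rep_bound a b p q u \<le> X"
        by simp
      then show False
        by (rule two_reps_from_bound[OF u]) (use unique in blast)
    qed
  qed (rule rep_unique_below_bound[OF u])
qed

definition below_bound_pairs :: "(nat \<times> int) set" where
  "below_bound_pairs = (SIGMA u:{..<a}. {- int (b * u div a)..<unique_rep_bound a b p q u})"

lemma mem_below_bound_pairs_iff:
  "(u, X) \<in> below_bound_pairs
    \<longleftrightarrow> u < a \<and> 0 \<le> int a * X + int b * int u \<and> X < unique_rep_bound a b p q u"
  using nonneg_iff_ge_neg_div[OF a_pos, of X "b * u"] by (auto simp: below_bound_pairs_def)

lemma inj_on_below_bound_pairs: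
  "inj_on (\<lambda>(u, X). nat (int a * X + int b * int u)) below_bound_pairs"
proof (rule inj_onI, clarify)
  fix u X u' X'
  assume "(u, X) \<in> below_bound_pairs" "(u', X') \<in> below_bound_pairs"
    and "nat (int a * X + int b * int u) = nat (int a * X' + int b * int u')"
  then have "u < a" "u' < a" "int a * X + int b * int u = int a * X' + int b * int u'"
    by (simp_all add: mem_below_bound_pairs_iff eq_nat_nat_iff)
  then show "u = u' \<and> X = X'"
    by (rule residue_decomposition_unique[OF coprime_ab])
qed

lemma num_reps_le_one_eq_image:
  "{n. num_reps [a, b, c] n \<le> 1} = (\<lambda>(u, X). nat (int a * X + int b * int u)) ` below_bound_pairs"
proof (intro set_eqI iffI)
  fix n
  assume n: "n \<in> {n. num_reps [a, b, c] n \<le> 1}"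
  obtain u X where u: "u < a" and nX: "int n = int a * X + int b * int u"
    using exists_residue_decomposition[OF coprime_ab a_pos] .
  then have n_eq: "n = nat (int a * X + int b * int u)" and nonneg: "0 \<le> int a * X + int b * int u"
    by (simp_all flip: nX)
  with n u have "(u, X) \<in> below_bound_pairs"
    using num_reps_le_one_iff_less_bound[OF u nonneg] by (simp add: mem_below_bound_pairs_iff)
  with n_eq show "n \<in> (\<lambda>(u, X). nat (int a * X + int b * int u)) ` below_bound_pairs"
    by force
next
  fix n
  assume "n \<in> (\<lambda>(u, X). nat (int a * X + int b * int u)) ` below_bound_pairs"
  then obtain u X where "u < a" "0 \<le> int a * X + int b * int u" "X < unique_rep_bound a b p q u"
    and "n = nat (int a * X + int b * int u)"
    by (auto simp: mem_below_bound_pairs_iff)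
  then show "n \<in> {n. num_reps [a, b, c] n \<le> 1}"
    using num_reps_le_one_iff_less_bound by simp
qed

lemma sylvester_p_one_eq_sum:
  "int (sylvester_p 1 [a, b, c]) = (\<Sum>u<a. unique_rep_bound a b p q u + int (b * u div a))"
proof -
  have "int (sylvester_p 1 [a, b, c]) = int (card below_bound_pairs)"
    unfolding sylvester_p_def num_reps_le_one_eq_image card_image[OF inj_on_below_bound_pairs] ..
  also have "\<dots> = (\<Sum>u<a. int (nat (unique_rep_bound a b p q u + int (b * u div a))))"
    by (simp add: below_bound_pairs_def)
  also have "\<dots> = (\<Sum>u<a. unique_rep_bound a b p q u + int (b * u div a))"
  proof (rule sum.cong)
    fix u
    assume "u \<in> {..<a}"
    then have "0 \<le> unique_rep_bound a b p q u + int (b * u div a)"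
      using unique_rep_bound_ge[of u] by simp
    then show "int (nat (unique_rep_bound a b p q u + int (b * u div a)))
        = unique_rep_bound a b p q u + int (b * u div a)"
      by simp
  qed simp
  finally show ?thesis .
qed

lemma sylvester_p_one_double:
  "2 * int (sylvester_p 1 [a, b, c])
     = 2 * (\<Sum>u<a. unique_rep_bound a b p q u) + int ((a - 1) * (b - 1))"
  using sylvester_p_one_eq_sum arg_cong[OF sum_div_coprime[OF coprime_ab], of int]
  by (simp add: sum.distrib)

lemma sylvester_p_one_double_real:
  "2 * real (sylvester_p 1 [a, b, c])
     = 2 * real_of_int (\<Sum>u<a. unique_rep_bound a b p q u) + (real a - 1) * (real b - 1)"
proof -
  have "real_of_int (2 * int (sylvester_p 1 [a, b, c]))
      = real_of_int (2 * (\<Sum>u<a. unique_rep_bound a b p q u) + int ((a - 1) * (b - 1)))"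
    by (simp only: sylvester_p_one_double)
  then show ?thesis
    using a_pos b_pos by simp
qed

lemma sylvester_p_one_if_a_le_q:
  assumes "a \<le> q"
  shows "real (sylvester_p 1 [a, b, c])
    = (3 * real a * real b - real a - real b + 1) / 2 - real (2 * a - q) * real p"
  using sylvester_p_one_double_real sum_unique_rep_bound_le[OF assms, of b p]
  by (simp add: algebra_simps)

lemma sylvester_p_one_if_q_lt_a:
  assumes "r = (a - 1) div q" and "r \<ge> 1"
  shows "real (sylvester_p 1 [a, b, c])
    = ((real a + 2 * real q - 1) * real b - real a + 1) / 2
      - (real r * real a - (real r - 1) * (real r + 2) / 2 * real q) * real p"
proof -
  have "real_of_int (2 * (\<Sum>u<a. unique_rep_bound a b p q u))
    = real_of_int (2 * (int q * int b - int p * int a)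
        - int p * (int q * (int r - 1) * (int r - 2) + 2 * (int r - 1) * (int a - int r * int q)))"
    using sum_unique_rep_bound_gt_closed[OF q_pos a_pos assms] by (rule arg_cong)
  with sylvester_p_one_double_real
  have "2 * real (sylvester_p 1 [a, b, c]) = 2 * (real q * real b - real p * real a)
      - real p * (real q * (real r - 1) * (real r - 2) + 2 * (real r - 1) * (real a - real r * real q))
      + (real a - 1) * (real b - 1)"
    by simp
  then show ?thesis
    by (simp add: field_simps)
qed

end

lemma fib_add_two:
  assumes "k \<ge> 2"
  shows "int (fib (i + k)) = int (fib k) * int (fib (i + 2)) - int (fib (k - 2)) * int (fib i)"
proof -
  obtain m where k: "k = m + 2"
    using assms by (metis add.commute le_Suc_ex)
  have "fib (i + k) = fib (Suc m) * fib (i + 2) + fib m * fib (i + 1)"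
    using fib_add[of "i + 1" m] by (simp add: k add.commute add.left_commute)
  then show ?thesis
    by (simp add: k fib_plus_2 algebra_simps)
qed

lemma coprime_fib_add_two: "coprime (fib n) (fib (n + 2))"
  using gcd_fib_add[of n 2] by (simp add: coprime_iff_gcd_eq_1 add.commute)

lemma double_fib_le_fib_add_two: "2 * fib n \<le> fib (n + 2)"
  using fib_mono[of n "n + 1"] by (simp add: fib_plus_2)

lemma fib_Suc_le_double: "n > 0 \<Longrightarrow> fib (Suc n) \<le> 2 * fib n"
  using fib_mono[of "n - 1" n] fib_plus_2[of "n - 1"] by (simp add: numeral_2_eq_2)

lemma sylvester_triple_fib:
  assumes "i \<ge> 1" and "k \<ge> 2"
  shows "sylvester_triple (fib i) (fib (i + 2)) (fib (i + k)) (fib (k - 2)) (fib k)"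
proof
  show "int (fib (i + k)) = int (fib k) * int (fib (i + 2)) - int (fib (k - 2)) * int (fib i)"
    using assms(2) by (rule fib_add_two)
  have "k - 2 + 2 = k"
    using assms by simp
  then have "2 * fib (k - 2) \<le> fib k"
    using double_fib_le_fib_add_two[of "k - 2"] by (simp only:)
  then have "(2 * fib (k - 2)) * (2 * fib i) \<le> fib k * fib (i + 2)"
    using double_fib_le_fib_add_two by (rule mult_le_mono)
  then show "3 * fib (k - 2) * fib i \<le> fib k * fib (i + 2)"
    by simp
qed (use assms coprime_fib_add_two fib_neq_0_nat in auto)

theorem theorem10:
  fixes i k :: nat
  assumes "i \<ge> 3" and "k \<ge> 3"
  shows
   "(k \<ge> i + 2 \<longrightarrow>
      real (sylvester_p 1 [fib i, fib (i+2), fib (i+k)]) =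
        (3 * real (fib i) * real (fib (i+2)) - real (fib i) - real (fib (i+2)) + 1) / 2)
  \<and> (k \<in> {i, i+1} \<longrightarrow>
      real (sylvester_p 1 [fib i, fib (i+2), fib (i+k)]) =
        (3 * real (fib i) * real (fib (i+2)) - real (fib i) - real (fib (i+2)) + 1) / 2
        - (2 * real (fib i) - real (fib k)) * real (fib (k-2)))
  \<and> (let r = (fib i - 1) div fib k in r \<ge> 1 \<longrightarrow>
      real (sylvester_p 1 [fib i, fib (i+2), fib (i+k)]) =
        ((real (fib i) + 2 * real (fib k) - 1) * real (fib (i+2)) - real (fib i) + 1) / 2
        - (real r * real (fib i) - (real r - 1) * (real r + 2) / 2 * real (fib k))
          * real (fib (k-2)))"
proof -
  interpret sylvester_triple "fib i" "fib (i + 2)" "fib (i + k)" "fib (k - 2)" "fib k"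
    using assms by (intro sylvester_triple_fib) simp_all
  have large: "fib i \<le> fib k \<and> 2 * fib i \<le> fib k" if "k \<ge> i + 2"
    using that double_fib_le_fib_add_two[of i] fib_mono[of "i + 2" k] fib_mono[of i k] by simp
  have middle: "fib i \<le> fib k \<and> fib k \<le> 2 * fib i" if "k \<in> {i, i + 1}"
    using that assms fib_Suc_le_double[of i] by (auto intro: fib_mono)
  show ?thesis
    using large middle sylvester_p_one_if_a_le_q sylvester_p_one_if_q_lt_a[OF refl]
    by (auto simp: Let_def)
qed

end
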